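(* Let $n\ge 1$ and $q>1$. Any optimal strategy (one of maximum success probability) for the New Hats-on-a-line Game with $q$ hat colours and $n$ players is a restricted strategy.
   Context: The New Hats-on-a-line Game with $q$ colours and $n$ players: players $P_1,\dots,P_n$ stand in a line, and each player $P_i$ receives a hat whose colour $c_i$ is chosen uniformly at random from a fixed set of $q$ colours, independently of the other hats. Player $P_i$ sees exactly the hat colours $c_{i+1},\dots,c_n$. The players respond sequentially in the order $P_1,\dots,P_n$; each response is either a colour (a guess of one's own hat colour) or "pass", and each player hears all previous responses. No other communication is allowed, apart from agreeing on a strategy beforehand. A strategy specifies (deterministically), for each player $P_i$, his response as a function of the colours he sees and the responses he has heard. The players win if at least one player guesses correctly and no player guesses incorrectly; the success probability of a strategy is the probability that the players win. A strategy is restricted if, for every configuration of hats $(c_1,\dots,c_n)$, any guess made by a player other than $P_1$ is correct. *)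

theory Defs
  imports Complex_Main
begin

text \<open>Colours are 0,...,q-1. Players P_1..P_n are indexed 0..n-1 (player i is P_(i+1)).
  A hat configuration is a list c of length n with entries < q; c!i is the hat of player i.\<close>

datatype response = Pass | Guess nat

text \<open>A strategy: player i responds as a function of the colours he sees
  (the list drop (Suc i) c, i.e. the hats of the later players) and the list of
  responses he has heard (those of players 0..i-1, in order).\<close>
type_synonym strategy = "nat \<Rightarrow> nat list \<Rightarrow> response list \<Rightarrow> response"

definition valid_strategy :: "nat \<Rightarrow> strategy \<Rightarrow> bool" where
  "valid_strategy q s \<longleftrightarrow> (\<forall>i seen heard g. s i seen heard = Guess g \<longrightarrow> g < q)"

definition configs :: "nat \<Rightarrow> nat \<Rightarrow> nat list set" where
  "configs q n = {c. length c = n \<and> (\<forall>x\<in>set c. x < q)}"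

fun responses :: "strategy \<Rightarrow> nat list \<Rightarrow> nat \<Rightarrow> response list" where
  "responses s c 0 = []"
| "responses s c (Suc i) = responses s c i @ [s i (drop (Suc i) c) (responses s c i)]"

definition wins :: "strategy \<Rightarrow> nat list \<Rightarrow> bool" where
  "wins s c \<longleftrightarrow> (let r = responses s c (length c) in
     (\<exists>i<length c. r ! i = Guess (c ! i)) \<and>
     (\<forall>i<length c. \<forall>g. r ! i = Guess g \<longrightarrow> g = c ! i))"

definition success_prob :: "nat \<Rightarrow> nat \<Rightarrow> strategy \<Rightarrow> real" where
  "success_prob q n s = real (card {c \<in> configs q n. wins s c}) / real q ^ n"

definition optimal_strategy :: "nat \<Rightarrow> nat \<Rightarrow> strategy \<Rightarrow> bool" where
  "optimal_strategy q n s \<longleftrightarrow> valid_strategy q s \<and>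
     (\<forall>t. valid_strategy q t \<longrightarrow> success_prob q n t \<le> success_prob q n s)"

definition restricted_strategy :: "nat \<Rightarrow> nat \<Rightarrow> strategy \<Rightarrow> bool" where
  "restricted_strategy q n s \<longleftrightarrow>
     (\<forall>c\<in>configs q n. \<forall>i. 1 \<le> i \<and> i < n \<longrightarrow>
        (\<forall>g. responses s c n ! i = Guess g \<longrightarrow> g = c ! i))"

end

theory Submission
  imports Defs
begin

text \<open>Suppose a player other than the first guesses wrongly in some configuration c.
  His response depends only on the hats of players 2,...,n, so the strategy loses on every
  configuration that agrees with c beyond the first hat. Modify the strategy so that the first
  player, on seeing exactly those hats, guesses colour 0, and so that everybody else passes
  whenever the first player guessed 0. Every configuration won before is still won, and the
  configuration with first hat 0 is won in addition; hence the original strategy was not optimal.\<close>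

lemma length_responses [simp]: "length (responses s c k) = k"
  by (induction k) auto

lemma nth_responses:
  "i < k \<Longrightarrow> responses s c k ! i = s i (drop (Suc i) c) (responses s c i)"
proof (induction k)
  case (Suc k)
  then show ?case by (cases "i < k") (auto simp: nth_append not_less_less_Suc_eq)
qed simp

lemma responses_cong_drop_first:
  "drop 1 c = drop 1 c' \<Longrightarrow> responses s c k = responses s c' k"
proof (induction k)
  case (Suc k)
  have "drop (Suc k) c = drop (Suc k) c'"
    using arg_cong[OF Suc.prems, of "drop k"] by simp
  with Suc show ?case by simp
qed simp

lemma finite_configs: "finite (configs q n)"
proof (rule finite_subset)
  show "configs q n \<subseteq> {xs. set xs \<subseteq> {..<q} \<and> length xs = n}"
    by (auto simp: configs_def)
qed (simp add: finite_lists_length_eq)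

lemma wins_imp_guesses_correct:
  "wins s c \<Longrightarrow> i < length c \<Longrightarrow> responses s c (length c) ! i = Guess g \<Longrightarrow> g = c ! i"
  unfolding wins_def Let_def by blast

lemma not_wins_if_later_wrong_guess:
  assumes "drop 1 c = drop 1 c0" "length c = length c0" "1 \<le> i" "i < length c0"
    and "responses s c0 (length c0) ! i = Guess g" "g \<noteq> c0 ! i"
  shows "\<not> wins s c"
proof
  assume "wins s c"
  moreover have "responses s c (length c) = responses s c0 (length c0)"
    using responses_cong_drop_first[OF assms(1)] assms(2) by simp
  ultimately have "g = c ! i"
    using assms(2,4,5) wins_imp_guesses_correct[of s c i g] by simp
  moreover have "c ! i = c0 ! i"
    using arg_cong[OF assms(1), of "\<lambda>xs. xs ! (i - 1)"] assms(2-4) by (simp add: nth_drop)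
  ultimately show False using assms(6) by simp
qed

definition guess_zero_on :: "strategy \<Rightarrow> nat list \<Rightarrow> strategy" where
  "guess_zero_on s d = (\<lambda>j seen heard.
     if j = 0 then (if seen = d then Guess 0 else s 0 seen heard)
     else if heard \<noteq> [] \<and> hd heard = Guess 0 then Pass
     else s j seen heard)"

lemma valid_strategy_guess_zero_on:
  "valid_strategy q s \<Longrightarrow> q > 0 \<Longrightarrow> valid_strategy q (guess_zero_on s d)"
  unfolding valid_strategy_def guess_zero_on_def by auto

lemma responses_guess_zero_on_first_zero:
  assumes "guess_zero_on s d 0 (drop 1 c) [] = Guess 0"
  shows "responses (guess_zero_on s d) c (Suc k) = Guess 0 # replicate k Pass"
proof (induction k)
  case 0
  show ?case using assms by simp
next
  case (Suc k)
  then show ?case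
    by (simp add: guess_zero_on_def replicate_append_same del: replicate_Suc)
       (simp add: replicate_append_same[symmetric])
qed

lemma responses_guess_zero_on_first_other:
  assumes "drop 1 c \<noteq> d" "s 0 (drop 1 c) [] \<noteq> Guess 0"
  shows "responses (guess_zero_on s d) c k = responses s c k"
proof (induction k)
  case (Suc k)
  have "guess_zero_on s d k (drop (Suc k) c) (responses s c k)
        = s k (drop (Suc k) c) (responses s c k)"
  proof (cases k)
    case (Suc m)
    then have "hd (responses s c k) = s 0 (drop 1 c) []"
      using nth_responses[of 0 k s c] by (simp add: hd_conv_nth)
    with assms show ?thesis by (simp add: guess_zero_on_def)
  qed (use assms in \<open>simp add: guess_zero_on_def\<close>)
  with Suc.IH show ?case by simp
qed simp

lemma wins_guess_zero_on_first_zero: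
  assumes "guess_zero_on s d 0 (drop 1 c) [] = Guess 0" "c \<noteq> []" "c ! 0 = 0"
  shows "wins (guess_zero_on s d) c"
proof -
  obtain k where "length c = Suc k" using assms(2) by (cases c) auto
  then show ?thesis
    using assms responses_guess_zero_on_first_zero[OF assms(1), of k]
    by (auto simp: wins_def nth_Cons split: nat.splits)
qed

lemma wins_guess_zero_on:
  assumes "wins s c" "drop 1 c \<noteq> d"
  shows "wins (guess_zero_on s d) c"
proof (cases "s 0 (drop 1 c) [] = Guess 0")
  case True
  have "c \<noteq> []" using assms(1) by (auto simp: wins_def)
  then have "c ! 0 = 0"
    using True wins_imp_guesses_correct[OF assms(1), of 0] nth_responses[of 0 "length c" s c]
    by simp
  moreover have "guess_zero_on s d 0 (drop 1 c) [] = Guess 0"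
    using True by (simp add: guess_zero_on_def)
  ultimately show ?thesis using \<open>c \<noteq> []\<close> wins_guess_zero_on_first_zero by blast
next
  case False
  with assms show ?thesis
    by (simp add: wins_def responses_guess_zero_on_first_other)
qed

lemma success_prob_less:
  assumes "q > 0" "\<And>c. c \<in> configs q n \<Longrightarrow> wins s c \<Longrightarrow> wins t c"
    and "c \<in> configs q n" "wins t c" "\<not> wins s c"
  shows "success_prob q n s < success_prob q n t"
proof -
  have "{c \<in> configs q n. wins s c} \<subset> {c \<in> configs q n. wins t c}"
    using assms(2-5) by blast
  then have "card {c \<in> configs q n. wins s c} < card {c \<in> configs q n. wins t c}"
    by (simp add: psubset_card_mono finite_configs)
  then show ?thesis
    using assms(1) by (simp add: success_prob_def divide_strict_right_mono)
qed

theorem lemma4: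
  fixes q n :: nat and s :: strategy
  assumes "n \<ge> 1" and "q > 1"
    and "optimal_strategy q n s"
  shows "restricted_strategy q n s"
  unfolding restricted_strategy_def
proof (intro ballI allI impI, rule ccontr)
  fix c0 i g
  assume c0: "c0 \<in> configs q n" and i: "1 \<le> i \<and> i < n"
    and guess: "responses s c0 n ! i = Guess g" and wrong: "g \<noteq> c0 ! i"
  define t where "t = guess_zero_on s (drop 1 c0)"
  have len: "length c0 = n" using c0 by (simp add: configs_def)
  have lose: "\<not> wins s c" if "drop 1 c = drop 1 c0" "length c = n" for c
    using not_wins_if_later_wrong_guess[of c c0 i s g] that i guess wrong len by simp
  have "valid_strategy q t"
    using assms(2,3) by (simp add: t_def optimal_strategy_def valid_strategy_guess_zero_on)
  then have "success_prob q n t \<le> success_prob q n s"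
    using assms(3) by (simp add: optimal_strategy_def)
  moreover have "success_prob q n s < success_prob q n t"
  proof (rule success_prob_less)
    show "wins t c" if "c \<in> configs q n" "wins s c" for c
    proof -
      have "drop 1 c \<noteq> drop 1 c0" using that lose by (auto simp: configs_def)
      with that(2) show ?thesis unfolding t_def by (rule wins_guess_zero_on)
    qed
    show "0 # drop 1 c0 \<in> configs q n"
      using c0 len assms(1,2) by (auto simp: configs_def dest: in_set_dropD)
    show "wins t (0 # drop 1 c0)"
      unfolding t_def by (rule wins_guess_zero_on_first_zero) (simp_all add: guess_zero_on_def)
    show "\<not> wins s (0 # drop 1 c0)"
      using lose len assms(1) by simp
  qed (use assms(2) in simp)
  ultimately show False by simp
qed

end
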